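(* Let $F$ be a field, $d\ge1$, and $x:\mathbb Z^2\to F$ such that $\det M^{(d+1)}_{j,k}=1$ and $\det M^{(d)}_{j,k}\neq0$ for all $j,k\in\mathbb Z$. Then there exist functions $d_1,\dots,d_d:\mathbb Z\to F$ such that for all $j,k\in\mathbb Z$, $$0=x_{j,k-d}+\sum_{i=1}^d(-1)^i\,d_i(j-k)\,x_{j-i,k+i-d}-(-1)^d\,x_{j-d-1,k+1}.$$ That is, the coefficients of this linear recursion depend only on $j-k$ and not on $j+k$.
   Context: For $m\ge1$, $M^{(m)}_{j,k}$ denotes the $m\times m$ matrix whose $(r,c)$ entry ($0\le r,c\le m-1$) is $x_{j-r+c,\;k-(m-1)+r+c}$. *)

theory Defs
  imports "Jordan_Normal_Form.Determinant"
begin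

definition Mmat :: "(int \<times> int \<Rightarrow> 'a::field) \<Rightarrow> nat \<Rightarrow> int \<Rightarrow> int \<Rightarrow> 'a mat" where
  "Mmat x m j k = mat m m (\<lambda>(r, c). x (j - int r + int c, k - (int m - 1) + int r + int c))"

end

theory Submission
  imports Defs
begin

(* Fix the difference g = j - k.  Along the anti-diagonal direction the
   entries x(c - r, c - g - d + r), r = 0..d+1, form a column vector C_g(c) of height d+2,
   and the matrices M^(d+1), M^(d) of the hypotheses are exactly windows of d+1
   (resp. d) consecutive such columns, with the top or the bottom row removed.
   For each window C(c),...,C(c+d) of d+1 columns of height d+2, the signed maximal
   minors phi_c(r) (cofactors along an appended last column) form a linear form
   annihilating all columns of the window (Laplace expansion + identical columns).
   Its two extreme coefficients are the two (d+1)-minors, normalised to 1, and the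
   nonvanishing d-minor forces any annihilator of the d shared columns with vanishing
   extreme coefficients to be zero.  Hence phi_c = phi_(c+1), so phi is independent
   of c, and one fixed linear form annihilates every column C_g(c).  Reading this
   relation at c = j gives the recursion with coefficients depending only on g. *)

definition aug_mat :: "(int \<Rightarrow> nat \<Rightarrow> 'a::comm_ring_1) \<Rightarrow> nat \<Rightarrow> int \<Rightarrow> (nat \<Rightarrow> 'a) \<Rightarrow> 'a mat" where
  "aug_mat C n c v = mat (Suc n) (Suc n) (\<lambda>(r, t). if t < n then C (c + int t) r else v r)"

text \<open>The cofactors along the last column; they do not depend on that column and
  are the coefficients of the linear form annihilating the window at c.\<close>
definition annihilator :: "(int \<Rightarrow> nat \<Rightarrow> 'a::comm_ring_1) \<Rightarrow> nat \<Rightarrow> int \<Rightarrow> nat \<Rightarrow> 'a" where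
  "annihilator C n c r = cofactor (aug_mat C n c (\<lambda>_. 0)) r n"

lemma aug_mat_delete:
  "mat_delete (aug_mat C n c v) r n = mat n n (\<lambda>(i, j). C (c + int j) (insert_index r i))"
  unfolding mat_delete_def aug_mat_def insert_index_def by (rule eq_matI) auto

lemma annihilator_eq_cofactor: "cofactor (aug_mat C n c v) r n = annihilator C n c r"
  unfolding annihilator_def cofactor_def aug_mat_delete ..

lemma det_aug_mat: "det (aug_mat C n c v) = (\<Sum>r<Suc n. v r * annihilator C n c r)"
proof -
  have "det (aug_mat C n c v) =
      (\<Sum>r<Suc n. aug_mat C n c v $$ (r, n) * cofactor (aug_mat C n c v) r n)"
    by (rule laplace_expansion_column) (simp_all add: aug_mat_def)
  also have "\<dots> = (\<Sum>r<Suc n. v r * annihilator C n c r)"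
  proof (rule sum.cong)
    fix r assume "r \<in> {..<Suc n}"
    then have "aug_mat C n c v $$ (r, n) = v r" by (simp add: aug_mat_def)
    then show "aug_mat C n c v $$ (r, n) * cofactor (aug_mat C n c v) r n = v r * annihilator C n c r"
      by (simp add: annihilator_eq_cofactor)
  qed simp
  finally show ?thesis .
qed

text \<open>The form annihilates every column of its window (two equal columns).\<close>
lemma annihilator_kills_window:
  assumes "t < n"
  shows "(\<Sum>r<Suc n. C (c + int t) r * annihilator C n c r) = 0"
proof -
  have "det (aug_mat C n c (C (c + int t))) = 0"
    by (rule det_identical_columns[of _ "Suc n" t n])
       (use assms in \<open>auto simp: aug_mat_def intro!: eq_vecI\<close>)
  then show ?thesis by (simp add: det_aug_mat)
qed

lemma annihilator_last:
  "annihilator C n c n = det (mat n n (\<lambda>(i, j). C (c + int j) i))"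
proof -
  have "mat n n (\<lambda>(i, j). C (c + int j) (insert_index n i)) = mat n n (\<lambda>(i, j). C (c + int j) i)"
    by (rule eq_matI) auto
  then show ?thesis unfolding annihilator_def cofactor_def aug_mat_delete by simp
qed

lemma annihilator_first:
  "annihilator C n c 0 = (-1) ^ n * det (mat n n (\<lambda>(i, j). C (c + int j) (Suc i)))"
proof -
  have "mat n n (\<lambda>(i, j). C (c + int j) (insert_index 0 i)) = mat n n (\<lambda>(i, j). C (c + int j) (Suc i))"
    by (rule eq_matI) auto
  then show ?thesis unfolding annihilator_def cofactor_def aug_mat_delete by simp
qed

lemma interior_annihilator_zero:
  fixes C :: "int \<Rightarrow> nat \<Rightarrow> 'a::field" and mu :: "nat \<Rightarrow> 'a"
  assumes first: "mu 0 = 0" and last: "mu (Suc d) = 0"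
    and kills: "\<And>t. t < d \<Longrightarrow> (\<Sum>r<Suc (Suc d). mu r * C (c + int t) r) = 0"
    and interior: "det (mat d d (\<lambda>(i, j). C (c + int j) (Suc i))) \<noteq> 0"
    and r: "r < Suc (Suc d)"
  shows "mu r = 0"
proof -
  define M where "M = mat d d (\<lambda>(i, j). C (c + int j) (Suc i))"
  define N where "N = transpose_mat M"
  define w where "w = vec d (\<lambda>i. mu (Suc i))"
  have M: "M \<in> carrier_mat d d" unfolding M_def by simp
  then have N: "N \<in> carrier_mat d d" unfolding N_def by simp
  have "det N \<noteq> 0"
    using interior det_transpose[OF M] unfolding N_def M_def by simp
  moreover have "N *\<^sub>v w = 0\<^sub>v d"
  proof (rule eq_vecI)
    fix t assume "t < dim_vec (0\<^sub>v d :: 'a vec)"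
    then have t: "t < d" by simp
    have "(\<Sum>r<Suc (Suc d). mu r * C (c + int t) r) =
        (\<Sum>i<d. mu (Suc i) * C (c + int t) (Suc i))"
      unfolding sum.lessThan_Suc[of _ "Suc d"] sum.lessThan_Suc_shift[of _ d]
      by (simp add: first last del: sum.lessThan_Suc)
    moreover have "(N *\<^sub>v w) $ t = (\<Sum>i<d. mu (Suc i) * C (c + int t) (Suc i))"
      using t unfolding N_def M_def w_def
      by (auto simp: scalar_prod_def lessThan_atLeast0 algebra_simps intro!: sum.cong)
    ultimately show "(N *\<^sub>v w) $ t = 0\<^sub>v d $ t" using kills[OF t] t by simp
  qed (simp add: N_def M_def w_def)
  moreover have "w \<in> carrier_vec d" unfolding w_def by simp
  ultimately have "w = 0\<^sub>v d"
    using det_0_iff_vec_prod_zero_field[OF N] by blast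
  then have "\<forall>i<d. mu (Suc i) = 0"
    unfolding w_def by (metis index_vec index_zero_vec(1))
  with first last r show ?thesis
    by (metis less_Suc_eq less_Suc_eq_0_disj)
qed

text \<open>With normalised (d+1)-minors and nonzero d-minors, consecutive windows have
  the same annihilating form: their difference has vanishing extreme coefficients and
  kills the d columns the two windows share.\<close>
lemma annihilator_shift:
  fixes C :: "int \<Rightarrow> nat \<Rightarrow> 'a::field"
  assumes top: "\<And>c. det (mat (Suc d) (Suc d) (\<lambda>(i, j). C (c + int j) i)) = 1"
    and bot: "\<And>c. det (mat (Suc d) (Suc d) (\<lambda>(i, j). C (c + int j) (Suc i))) = 1"
    and inner: "\<And>c. det (mat d d (\<lambda>(i, j). C (c + int j) (Suc i))) \<noteq> 0"
    and r: "r < Suc (Suc d)"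
  shows "annihilator C (Suc d) (c + 1) r = annihilator C (Suc d) c r"
proof -
  let ?phi = "annihilator C (Suc d)"
  have "?phi (c + 1) r - ?phi c r = 0"
  proof (rule interior_annihilator_zero[where c = "c + 1" and C = C and d = d])
    fix t assume t: "t < d"
    let ?col = "C (c + 1 + int t)"
    have new: "(\<Sum>r<Suc (Suc d). ?col r * ?phi (c + 1) r) = 0"
      using t by (intro annihilator_kills_window) simp
    have shifted: "c + int (Suc t) = c + 1 + int t" by simp
    have old: "(\<Sum>r<Suc (Suc d). ?col r * ?phi c r) = 0"
      using annihilator_kills_window[of "Suc t" "Suc d" C c] t unfolding shifted by simp
    have "(\<Sum>r<Suc (Suc d). (?phi (c + 1) r - ?phi c r) * ?col r) =
        (\<Sum>r<Suc (Suc d). ?col r * ?phi (c + 1) r - ?col r * ?phi c r)"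
      by (intro sum.cong refl) (simp add: algebra_simps)
    also have "\<dots> = 0"
      unfolding sum_subtractf new old by simp
    finally show "(\<Sum>r<Suc (Suc d). (?phi (c + 1) r - ?phi c r) * ?col r) = 0" .
  next
    show "?phi (c + 1) 0 - ?phi c 0 = 0"
      by (simp only: annihilator_first bot diff_self)
    show "?phi (c + 1) (Suc d) - ?phi c (Suc d) = 0"
      by (simp only: annihilator_last top diff_self)
    show "det (mat d d (\<lambda>(i, j). C (c + 1 + int j) (Suc i))) \<noteq> 0" by (rule inner)
  qed (rule r)
  then show ?thesis by simp
qed

theorem shift_invariant_relation:
  fixes C :: "int \<Rightarrow> nat \<Rightarrow> 'a::field" and d :: nat
  assumes top: "\<And>c. det (mat (Suc d) (Suc d) (\<lambda>(i, j). C (c + int j) i)) = 1"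
    and bot: "\<And>c. det (mat (Suc d) (Suc d) (\<lambda>(i, j). C (c + int j) (Suc i))) = 1"
    and inner: "\<And>c. det (mat d d (\<lambda>(i, j). C (c + int j) (Suc i))) \<noteq> 0"
  shows "\<exists>l. l 0 = 1 \<and> l (Suc d) = (-1) ^ Suc d \<and>
           (\<forall>c. (\<Sum>r<Suc (Suc d). l r * C c r) = 0)"
proof -
  let ?phi = "annihilator C (Suc d)"
  have const: "?phi c r = ?phi 0 r" if r: "r < Suc (Suc d)" for c r
  proof (induction c rule: int_induct[where k = 0])
    case (step1 i)
    then show ?case using annihilator_shift[OF top bot inner r, of i] by simp
  next
    case (step2 i)
    moreover have "?phi (i - 1 + 1) r = ?phi (i - 1) r"
      by (rule annihilator_shift[OF top bot inner r])
    ultimately show ?case by simp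
  qed (rule refl)
  define l where "l r = (-1) ^ Suc d * ?phi 0 r" for r
  have "(\<Sum>r<Suc (Suc d). l r * C c r) = 0" for c
  proof -
    have "(\<Sum>r<Suc (Suc d). l r * C c r) =
        (-1) ^ Suc d * (\<Sum>r<Suc (Suc d). C (c + int 0) r * ?phi c r)"
      unfolding l_def sum_distrib_left by (intro sum.cong refl) (simp add: const[where c = c] mult_ac)
    also have "\<dots> = 0"
      by (simp only: annihilator_kills_window zero_less_Suc mult_zero_right)
    finally show ?thesis .
  qed
  moreover have "?phi 0 0 = (-1) ^ Suc d" "?phi 0 (Suc d) = 1"
    using annihilator_first[of C "Suc d" 0] annihilator_last[of C "Suc d" 0] bot[of 0] top[of 0]
    by simp_all
  then have "l 0 = 1" "l (Suc d) = (-1) ^ Suc d"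
    unfolding l_def by simp_all
  ultimately show ?thesis by blast
qed

text \<open>The column of height d+2 at position c on the line j - k = g.\<close>
definition diag_column :: "(int \<times> int \<Rightarrow> 'a) \<Rightarrow> nat \<Rightarrow> int \<Rightarrow> int \<Rightarrow> nat \<Rightarrow> 'a" where
  "diag_column x d g c r = x (c - int r, c - g - int d + int r)"

lemma diag_column_windows:
  fixes x :: "int \<times> int \<Rightarrow> 'a::field"
  shows "mat (Suc d) (Suc d) (\<lambda>(i, j). diag_column x d g (c + int j) i) = Mmat x (d + 1) c (c - g)"
    and "mat (Suc d) (Suc d) (\<lambda>(i, j). diag_column x d g (c + int j) (Suc i)) =
           Mmat x (d + 1) (c - 1) (c - g + 1)"
    and "mat d d (\<lambda>(i, j). diag_column x d g (c + int j) (Suc i)) = Mmat x d (c - 1) (c - g)"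
  unfolding Mmat_def diag_column_def by (rule eq_matI; auto simp: algebra_simps)+

lemma sum_split_ends:
  fixes f :: "nat \<Rightarrow> 'a::comm_monoid_add"
  shows "(\<Sum>r<Suc (Suc d). f r) = f 0 + (\<Sum>i = 1..d. f i) + f (Suc d)"
  unfolding sum.lessThan_Suc[of f "Suc d"] sum.lessThan_Suc_shift[of f d]
  by (simp add: sum.atLeast1_atMost_eq[symmetric])

lemma diag_relation_expanded:
  fixes x :: "int \<times> int \<Rightarrow> 'a::field"
  assumes "l 0 = 1" "l (Suc d) = (-1) ^ Suc d"
    and rel: "(\<Sum>r<Suc (Suc d). l r * diag_column x d (j - k) j r) = 0"
  shows "0 = x (j, k - int d)
           + (\<Sum>i = 1..d. (-1) ^ i * ((-1) ^ i * l i) * x (j - int i, k + int i - int d))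
           - (-1) ^ d * x (j - int d - 1, k + 1)"
proof -
  have "(\<Sum>i = 1..d. l i * diag_column x d (j - k) j i) =
      (\<Sum>i = 1..d. (-1) ^ i * ((-1) ^ i * l i) * x (j - int i, k + int i - int d))"
    by (rule sum.cong) (simp_all add: diag_column_def algebra_simps flip: power_add mult_2)
  then show ?thesis
    using rel assms(1,2) unfolding sum_split_ends
    by (simp add: diag_column_def algebra_simps)
qed

theorem mainTheorem7:
  fixes x :: "int \<times> int \<Rightarrow> 'a::field" and d :: nat
  assumes "d \<ge> 1"
    and "\<forall>j k. det (Mmat x (d + 1) j k) = 1"
    and "\<forall>j k. det (Mmat x d j k) \<noteq> 0"
  shows "\<exists>dd :: nat \<Rightarrow> int \<Rightarrow> 'a. \<forall>j k.
           0 = x (j, k - int d)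
             + (\<Sum>i = 1..d. (-1) ^ i * dd i (j - k) * x (j - int i, k + int i - int d))
             - (-1) ^ d * x (j - int d - 1, k + 1)"
proof -
  have "\<exists>l. l 0 = 1 \<and> l (Suc d) = (-1) ^ Suc d \<and>
           (\<forall>c. (\<Sum>r<Suc (Suc d). l r * diag_column x d g c r) = 0)" for g
    by (rule shift_invariant_relation) (use assms(2,3) in \<open>simp_all add: diag_column_windows\<close>)
  then obtain L where "\<And>g. L g 0 = 1" "\<And>g. L g (Suc d) = (-1) ^ Suc d"
    and "\<And>g c. (\<Sum>r<Suc (Suc d). L g r * diag_column x d g c r) = 0"
    by metis
  then have "0 = x (j, k - int d)
             + (\<Sum>i = 1..d. (-1) ^ i * ((-1) ^ i * L (j - k) i) * x (j - int i, k + int i - int d))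
             - (-1) ^ d * x (j - int d - 1, k + 1)" for j k
    by (intro diag_relation_expanded) auto
  then show ?thesis by (intro exI[of _ "\<lambda>i g. (-1) ^ i * L g i"] allI)
qed

end
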